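(* Let $k\ge2$. Then $\operatorname{ZIR}(N_k)=2k=\frac12|V(N_k)|$.
   Context: The $k$th necklace $N_k$: take $k$ disjoint diamonds (a diamond is $K_4$ minus an edge), the $i$th having vertices $a_i,b_i,c_i,d_i$ with all edges among them except $a_ic_i$; add the edges $c_ia_{i+1}$ for $1\le i\le k-1$ and $c_ka_1$. A nonempty $F\subseteq V(G)$ is a fort if every $v\notin F$ has $|N(v)\cap F|\ne1$. A private fort of $x\in S$ relative to $S$ is a fort $F$ with $S\cap F=\{x\}$; $S$ is a ZIr-set if every element of $S$ has a private fort. $\operatorname{ZIR}(G)$ is the maximum cardinality of an inclusion-maximal ZIr-set. *)

theory Defs
  imports Main
begin

text \<open>A (finite simple) graph is given by a vertex set V and a symmetric,
irreflexive adjacency relation E (with edges only inside V).\<close>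

definition nbhd :: "('a \<Rightarrow> 'a \<Rightarrow> bool) \<Rightarrow> 'a \<Rightarrow> 'a set" where
  "nbhd E v = {u. E v u}"

definition is_fort :: "'a set \<Rightarrow> ('a \<Rightarrow> 'a \<Rightarrow> bool) \<Rightarrow> 'a set \<Rightarrow> bool" where
  "is_fort V E F \<longleftrightarrow> F \<noteq> {} \<and> F \<subseteq> V \<and>
     (\<forall>v \<in> V - F. card (nbhd E v \<inter> F) \<noteq> 1)"

definition private_fort :: "'a set \<Rightarrow> ('a \<Rightarrow> 'a \<Rightarrow> bool) \<Rightarrow> 'a set \<Rightarrow> 'a \<Rightarrow> 'a set \<Rightarrow> bool" where
  "private_fort V E S x F \<longleftrightarrow> is_fort V E F \<and> S \<inter> F = {x}"

definition zir_set :: "'a set \<Rightarrow> ('a \<Rightarrow> 'a \<Rightarrow> bool) \<Rightarrow> 'a set \<Rightarrow> bool" where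
  "zir_set V E S \<longleftrightarrow> S \<subseteq> V \<and> (\<forall>x \<in> S. \<exists>F. private_fort V E S x F)"

definition maximal_zir_set :: "'a set \<Rightarrow> ('a \<Rightarrow> 'a \<Rightarrow> bool) \<Rightarrow> 'a set \<Rightarrow> bool" where
  "maximal_zir_set V E S \<longleftrightarrow> zir_set V E S \<and>
     (\<forall>T. zir_set V E T \<and> S \<subseteq> T \<longrightarrow> T = S)"

definition ZIR :: "'a set \<Rightarrow> ('a \<Rightarrow> 'a \<Rightarrow> bool) \<Rightarrow> nat" where
  "ZIR V E = Max {card S | S. maximal_zir_set V E S}"

text \<open>The necklace N_k: vertex (i,j) with i<k is the j-th vertex of diamond i,
 where j = 0,1,2,3 stands for a_i, b_i, c_i, d_i (diamonds indexed 0..k-1).\<close>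

definition necklace_V :: "nat \<Rightarrow> (nat \<times> nat) set" where
  "necklace_V k = {..<k} \<times> {..<4}"

definition necklace_E :: "nat \<Rightarrow> nat \<times> nat \<Rightarrow> nat \<times> nat \<Rightarrow> bool" where
  "necklace_E k p q \<longleftrightarrow> p \<in> necklace_V k \<and> q \<in> necklace_V k \<and>
     ((fst p = fst q \<and> snd p \<noteq> snd q \<and> {snd p, snd q} \<noteq> {0, 2}) \<or>
      (snd p = 2 \<and> snd q = 0 \<and> fst q = (fst p + 1) mod k) \<or>
      (snd p = 0 \<and> snd q = 2 \<and> fst p = (fst q + 1) mod k))"

end

theory Submission
  imports Defs
begin

text \<open>Upper bound: \<open>b\<^sub>i\<close> and \<open>d\<^sub>i\<close> are closed twins whose neighbourhoods
  are the rest of the diamond, so a fort never meets a diamond in exactly one vertex. Hence a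
  ZIr-set \<open>S\<close> contains at most three vertices of each diamond, and if it contains three vertices
  of \<open>D\<^sub>i\<close>, every fort private to a vertex outside \<open>D\<^sub>i\<close> avoids \<open>D\<^sub>i\<close>. Such a fort can enter a
  neighbouring diamond only through its twins, so the private forts of the vertices of \<open>S\<close> there
  all contain both twins, which leaves room for at most one vertex of \<open>S\<close>. Thus two consecutive
  diamonds carry at most four vertices of \<open>S\<close>, and summing around the cycle gives \<open>|S| \<le> 2k\<close>.

  Lower bound: the \<open>b\<close>- and \<open>c\<close>-vertices form a ZIr-set, with private forts
  \<open>{b\<^sub>i, d\<^sub>i}\<close> and \<open>{a\<^sub>j | j} \<union> {c\<^sub>i} \<union> {d\<^sub>j | j \<noteq> i}\<close>; having the largest possible
  size, it is inclusion-maximal.\<close>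

lemma sum_lessThan_mod_shift:
  fixes f :: "nat \<Rightarrow> 'a::comm_monoid_add"
  assumes "0 < k"
  shows "(\<Sum>i<k. f (Suc i mod k)) = (\<Sum>i<k. f i)"
proof -
  obtain n where k: "k = Suc n" using assms gr0_conv_Suc by blast
  have "(\<Sum>i<k. f (Suc i mod k)) = (\<Sum>i<n. f (Suc i)) + f 0"
    unfolding k by (simp add: sum.lessThan_Suc)
  also have "\<dots> = (\<Sum>i<k. f i)"
    unfolding k using sum.lessThan_Suc_shift[of f n] by (simp add: add.commute)
  finally show ?thesis .
qed

lemma fort_nbhd_inter_neq_singleton:
  assumes "is_fort V E F" "v \<in> V - F"
  shows "nbhd E v \<inter> F \<noteq> {w}"
proof
  assume "nbhd E v \<inter> F = {w}"
  moreover have "card (nbhd E v \<inter> F) \<noteq> 1" using assms unfolding is_fort_def by blast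
  ultimately show False by simp
qed

lemma zir_set_private_fort:
  "zir_set V E S \<Longrightarrow> x \<in> S \<Longrightarrow> \<exists>F. is_fort V E F \<and> S \<inter> F = {x}"
  unfolding zir_set_def private_fort_def by blast

lemma closed_twins_is_fort:
  assumes "b \<in> V" "d \<in> V" "b \<noteq> d"
    and "\<And>v. v \<in> V - {b, d} \<Longrightarrow> E v b \<longleftrightarrow> E v d"
  shows "is_fort V E {b, d}"
  unfolding is_fort_def
proof (intro conjI ballI)
  fix v assume "v \<in> V - {b, d}"
  then have "nbhd E v \<inter> {b, d} = {} \<or> nbhd E v \<inter> {b, d} = {b, d}"
    using assms(4) by (auto simp: nbhd_def)
  then show "card (nbhd E v \<inter> {b, d}) \<noteq> 1"
    using \<open>b \<noteq> d\<close> by auto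
qed (use assms in auto)

definition fort_never_meets_once :: "'a set \<Rightarrow> ('a \<Rightarrow> 'a \<Rightarrow> bool) \<Rightarrow> 'a set \<Rightarrow> bool" where
  "fort_never_meets_once V E D \<longleftrightarrow> (\<forall>F v. is_fort V E F \<longrightarrow> F \<inter> D \<noteq> {v})"

lemma closed_twins_fort_never_meets_once:
  assumes "b \<in> D" "d \<in> D" "b \<noteq> d" "D \<subseteq> V"
    and "nbhd E b = D - {b}" "nbhd E d = D - {d}"
  shows "fort_never_meets_once V E D"
  unfolding fort_never_meets_once_def
proof (intro allI impI notI)
  fix F v assume F: "is_fort V E F" and once: "F \<inter> D = {v}"
  show False
  proof (cases "v = b")
    case True
    then have "nbhd E d \<inter> F = {v}" using once assms by auto
    moreover have "d \<in> V - F" using once assms True by auto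
    ultimately show False using fort_nbhd_inter_neq_singleton[OF F] by blast
  next
    case False
    then have "nbhd E b \<inter> F = {v}" using once assms by auto
    moreover have "b \<in> V - F" using once assms False by auto
    ultimately show False using fort_nbhd_inter_neq_singleton[OF F] by blast
  qed
qed

lemma zir_set_not_superset:
  assumes "zir_set V E S" "fort_never_meets_once V E D" "D \<noteq> {}"
  shows "\<not> D \<subseteq> S"
proof
  assume "D \<subseteq> S"
  obtain x where "x \<in> D" using \<open>D \<noteq> {}\<close> by blast
  then obtain F where "is_fort V E F" "S \<inter> F = {x}"
    using zir_set_private_fort[OF assms(1)] \<open>D \<subseteq> S\<close> by blast
  then have "F \<inter> D = {x}" using \<open>x \<in> D\<close> \<open>D \<subseteq> S\<close> by blast
  then show False using assms(2) \<open>is_fort V E F\<close> unfolding fort_never_meets_once_def by blast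
qed

lemma private_fort_avoids_nearly_covered:
  assumes "is_fort V E F" "S \<inter> F = {x}" "x \<notin> D"
    and "fort_never_meets_once V E D" "finite D" "card (D - S) \<le> 1"
  shows "F \<inter> D = {}"
proof -
  have "F \<inter> D \<subseteq> D - S" using assms(2,3) by auto
  then have "card (F \<inter> D) \<le> 1"
    using card_mono[of "D - S" "F \<inter> D"] assms(5,6) by simp
  moreover have "card (F \<inter> D) \<noteq> 1"
    using assms(1,4) card_1_singletonE unfolding fort_never_meets_once_def by metis
  ultimately have "card (F \<inter> D) = 0" by linarith
  then show ?thesis using \<open>finite D\<close> by simp
qed

lemma fort_enters_through_twins:
  assumes F: "is_fort V E F" and D: "fort_never_meets_once V E D" "D = {e, b, d, f}"
    and e: "e \<in> V" "nbhd E e = {b, d, p}"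
    and p: "p \<in> V - F" "E p e" "nbhd E p \<inter> F \<subseteq> {e}"
    and meets: "F \<inter> D \<noteq> {}"
  shows "b \<in> F \<and> d \<in> F \<and> e \<notin> F"
proof -
  have "e \<notin> F"
    using fort_nbhd_inter_neq_singleton[OF F p(1)] p(2,3) by (auto simp: nbhd_def)
  then have "nbhd E e \<inter> F \<noteq> {b}" "nbhd E e \<inter> F \<noteq> {d}"
    using fort_nbhd_inter_neq_singleton[OF F] e by blast+
  then have "b \<in> F \<longleftrightarrow> d \<in> F" using e(2) p(1) by auto
  moreover have "F \<inter> D \<noteq> {f}" using D F unfolding fort_never_meets_once_def by blast
  ultimately show ?thesis using meets D(2) \<open>e \<notin> F\<close> by auto
qed

lemma card_le_1_if_private_forts_share:
  assumes "A \<subseteq> S" "A \<subseteq> insert c W"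
    and "\<And>x. x \<in> A \<Longrightarrow> \<exists>F. S \<inter> F = {x} \<and> W \<subseteq> F"
  shows "card A \<le> 1"
proof -
  have same: "x = y" if "x \<in> A" "y \<in> A" for x y
  proof -
    have "u = v" if "u \<in> A" "v \<in> A" "u \<in> W" for u v
      using assms(1) assms(3)[OF that(2)] that by blast
    then show "x = y" using that assms(2) by blast
  qed
  show ?thesis
  proof (cases "A = {}")
    case False
    then obtain x where "x \<in> A" by blast
    then have "A = {x}" using same by blast
    then show ?thesis by simp
  qed simp
qed

lemma zir_set_card_le_1_beside_nearly_covered:
  assumes S: "zir_set V E S"
    and D: "fort_never_meets_once V E D" "finite D" "card (D - S) \<le> 1"
    and D': "fort_never_meets_once V E D'" "D' = {e, b, d, f}" "D \<inter> D' = {}"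
    and e: "e \<in> V" "nbhd E e = {b, d, p}"
    and p: "p \<in> D" "p \<in> V" "E p e" "nbhd E p \<subseteq> D \<union> {e}"
  shows "card (S \<inter> D') \<le> 1"
proof -
  have fort: "\<exists>F. S \<inter> F = {x} \<and> b \<in> F \<and> d \<in> F \<and> e \<notin> F" if x: "x \<in> S \<inter> D'" for x
  proof -
    obtain F where F: "is_fort V E F" "S \<inter> F = {x}"
      using zir_set_private_fort[OF S] x by blast
    have "x \<notin> D" using x D'(3) by blast
    then have "F \<inter> D = {}"
      using private_fort_avoids_nearly_covered[OF F] D by blast
    then have "p \<in> V - F" "nbhd E p \<inter> F \<subseteq> {e}" using p by auto
    moreover have "F \<inter> D' \<noteq> {}" using x F(2) by blast
    ultimately show ?thesis
      using fort_enters_through_twins[OF F(1) D'(1,2) e _ p(3)] F(2) by blast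
  qed
  show ?thesis
  proof (rule card_le_1_if_private_forts_share[where S = S and c = f and W = "{b, d}"])
    show "S \<inter> D' \<subseteq> insert f {b, d}"
      using fort D'(2) by fastforce
    show "\<exists>F. S \<inter> F = {x} \<and> {b, d} \<subseteq> F" if "x \<in> S \<inter> D'" for x
      using fort[OF that] by blast
  qed blast
qed

lemma ZIR_eqI:
  assumes "finite V" "zir_set V E S" "\<And>T. zir_set V E T \<Longrightarrow> card T \<le> card S"
  shows "ZIR V E = card S"
proof -
  have "maximal_zir_set V E S"
    unfolding maximal_zir_set_def
  proof (intro conjI allI impI)
    fix T assume T: "zir_set V E T \<and> S \<subseteq> T"
    then have "finite T" using \<open>finite V\<close> by (auto simp: zir_set_def intro: finite_subset)
    moreover have "card T \<le> card S" using T assms(3) by blast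
    ultimately show "T = S" using T card_subset_eq[of T S] card_mono[of T S] by simp
  qed (fact assms(2))
  moreover have "n \<le> card S" if "n \<in> {card T | T. maximal_zir_set V E T}" for n
    using that assms(3) by (auto simp: maximal_zir_set_def)
  ultimately show ?thesis
    unfolding ZIR_def by (intro Max_eqI) (auto intro: finite_subset[of _ "{..card S}"])
qed

lemma succ_mod_eq: "i < k \<Longrightarrow> Suc i mod k = (if Suc i = k then 0 else Suc i)"
  by (cases "Suc i = k") (auto intro: mod_less)

lemma succ_mod_inj: "i < k \<Longrightarrow> j < k \<Longrightarrow> Suc i mod k = Suc j mod k \<Longrightarrow> i = j"
  by (auto simp: succ_mod_eq split: if_splits)

lemma necklace_E_iff:
  "necklace_E k (i, s) (j, t) \<longleftrightarrow> i < k \<and> s < 4 \<and> j < k \<and> t < 4 \<and>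
     ((i = j \<and> s \<noteq> t \<and> \<not> (s = 0 \<and> t = 2) \<and> \<not> (s = 2 \<and> t = 0)) \<or>
      (s = 2 \<and> t = 0 \<and> j = Suc i mod k) \<or> (s = 0 \<and> t = 2 \<and> i = Suc j mod k))"
  by (auto simp: necklace_E_def necklace_V_def doubleton_eq_iff)

lemma nbhd_necklace_b: "i < k \<Longrightarrow> nbhd (necklace_E k) (i, 1) = {(i, 0), (i, 2), (i, 3)}"
  unfolding nbhd_def by (auto simp: necklace_E_iff)

lemma nbhd_necklace_c: "i < k \<Longrightarrow> nbhd (necklace_E k) (i, 2) = {(i, 1), (i, 3), (Suc i mod k, 0)}"
  unfolding nbhd_def by (auto simp: necklace_E_iff)

lemma nbhd_necklace_d: "i < k \<Longrightarrow> nbhd (necklace_E k) (i, 3) = {(i, 0), (i, 1), (i, 2)}"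
  unfolding nbhd_def by (auto simp: necklace_E_iff)

lemma nbhd_necklace_a_succ:
  "i < k \<Longrightarrow> nbhd (necklace_E k) (Suc i mod k, 0) = {(Suc i mod k, 1), (Suc i mod k, 3), (i, 2)}"
  unfolding nbhd_def by (auto simp: necklace_E_iff dest: succ_mod_inj)

definition diamond :: "nat \<Rightarrow> (nat \<times> nat) set" where
  "diamond j = {j} \<times> {..<4}"

lemma diamond_eq: "diamond j = {(j, 0), (j, 1), (j, 2), (j, 3)}"
  by (auto simp: diamond_def)

lemma card_diamond_diff: "card (diamond j - S) = 4 - card (S \<inter> diamond j)"
  by (simp add: card_Diff_subset_Int Int_commute diamond_def card_cartesian_product)

lemma necklace_diamond_fort_never_meets_once:
  "j < k \<Longrightarrow> fort_never_meets_once (necklace_V k) (necklace_E k) (diamond j)"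
  by (rule closed_twins_fort_never_meets_once[of "(j, 1)" _ "(j, 3)"])
    (use nbhd_necklace_b[of j k] nbhd_necklace_d[of j k] in \<open>auto simp: diamond_eq necklace_V_def\<close>)

lemma zir_set_card_diamond_le_3:
  assumes "zir_set (necklace_V k) (necklace_E k) S" "j < k"
  shows "card (S \<inter> diamond j) \<le> 3"
proof -
  have "\<not> diamond j \<subseteq> S"
    using zir_set_not_superset[OF assms(1) necklace_diamond_fort_never_meets_once[OF assms(2)]]
    by (simp add: diamond_eq)
  then have "S \<inter> diamond j \<subset> diamond j" by blast
  then have "card (S \<inter> diamond j) < card (diamond j)"
    by (rule psubset_card_mono[rotated]) (simp add: diamond_def)
  then show ?thesis by (simp add: diamond_def card_cartesian_product)
qed

lemma zir_set_card_consecutive_diamonds_le_4: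
  assumes k: "k \<ge> 2" "i < k" and S: "zir_set (necklace_V k) (necklace_E k) S"
  shows "card (S \<inter> diamond i) + card (S \<inter> diamond (Suc i mod k)) \<le> 4"
proof -
  let ?i' = "Suc i mod k"
  have i': "?i' < k" "?i' \<noteq> i" using k by (auto simp: succ_mod_eq)
  have disj: "diamond i \<inter> diamond ?i' = {}" using i' by (auto simp: diamond_def)
  have nearly_covered: "card (diamond j - S) \<le> 1" if "card (S \<inter> diamond j) \<ge> 3" for j
    using that by (simp add: card_diamond_diff)
  note diamond_forts = necklace_diamond_fort_never_meets_once[OF k(2)]
    necklace_diamond_fort_never_meets_once[OF i'(1)]
  consider "card (S \<inter> diamond i) \<ge> 3" | "card (S \<inter> diamond ?i') \<ge> 3"
    | "card (S \<inter> diamond i) \<le> 2" "card (S \<inter> diamond ?i') \<le> 2" by linarith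
  then show ?thesis
  proof cases
    case 1
    have "card (S \<inter> diamond ?i') \<le> 1"
      by (rule zir_set_card_le_1_beside_nearly_covered[OF S, of "diamond i" "diamond ?i'"
            "(?i', 0)" "(?i', 1)" "(?i', 3)" "(?i', 2)" "(i, 2)"])
        (use k i' disj nearly_covered[OF 1] diamond_forts in
          \<open>auto simp: diamond_eq necklace_V_def
             nbhd_necklace_a_succ nbhd_necklace_c necklace_E_iff\<close>)
    then show ?thesis using zir_set_card_diamond_le_3[OF S k(2)] by linarith
  next
    case 2
    have "card (S \<inter> diamond i) \<le> 1"
      by (rule zir_set_card_le_1_beside_nearly_covered[OF S, of "diamond ?i'" "diamond i"
            "(i, 2)" "(i, 1)" "(i, 3)" "(i, 0)" "(?i', 0)"])
        (use k i' disj nearly_covered[OF 2] diamond_forts in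
          \<open>auto simp: diamond_eq necklace_V_def
             nbhd_necklace_a_succ nbhd_necklace_c necklace_E_iff\<close>)
    then show ?thesis using zir_set_card_diamond_le_3[OF S i'(1)] by linarith
  qed linarith
qed

lemma zir_set_necklace_card_le:
  assumes "k \<ge> 2" and S: "zir_set (necklace_V k) (necklace_E k) S"
  shows "card S \<le> 2 * k"
proof -
  let ?c = "\<lambda>i. card (S \<inter> diamond i)"
  have "S = (\<Union>i<k. S \<inter> diamond i)"
    using S by (auto simp: zir_set_def necklace_V_def diamond_def)
  also have "card \<dots> = (\<Sum>i<k. ?c i)"
    by (rule card_UN_disjoint) (auto simp: diamond_def)
  finally have "2 * card S = (\<Sum>i<k. ?c i + ?c (Suc i mod k))"
    using sum_lessThan_mod_shift[of k ?c] assms(1) by (simp add: sum.distrib)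
  also have "\<dots> \<le> (\<Sum>i<k. 4)"
    by (rule sum_mono) (use zir_set_card_consecutive_diamonds_le_4 assms in auto)
  finally show ?thesis by simp
qed

lemma is_fort_necklace_b_d: "i < k \<Longrightarrow> is_fort (necklace_V k) (necklace_E k) {(i, 1), (i, 3)}"
  by (rule closed_twins_is_fort) (auto simp: necklace_V_def necklace_E_iff)

definition necklace_c_fort :: "nat \<Rightarrow> nat \<Rightarrow> (nat \<times> nat) set" where
  "necklace_c_fort k i = {(j, s) \<in> necklace_V k. s = 0 \<or> (j = i \<and> s = 2) \<or> (j \<noteq> i \<and> s = 3)}"

lemma mem_necklace_c_fort:
  "(j, s) \<in> necklace_c_fort k i \<longleftrightarrow> j < k \<and> s < 4 \<and> (s = 0 \<or> (j = i \<and> s = 2) \<or> (j \<noteq> i \<and> s = 3))"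
  by (auto simp: necklace_c_fort_def necklace_V_def)

lemma is_fort_necklace_c_fort:
  assumes "i < k"
  shows "is_fort (necklace_V k) (necklace_E k) (necklace_c_fort k i)"
  unfolding is_fort_def
proof (intro conjI ballI)
  have "(i, 0) \<in> necklace_c_fort k i" using assms by (simp add: mem_necklace_c_fort)
  then show "necklace_c_fort k i \<noteq> {}" by blast
  show "necklace_c_fort k i \<subseteq> necklace_V k" by (auto simp: necklace_c_fort_def)
  fix v assume "v \<in> necklace_V k - necklace_c_fort k i"
  then obtain j s where v: "v = (j, s)" "j < k" "s < 4" "s \<noteq> 0"
      "s = 2 \<longrightarrow> j \<noteq> i" "s = 3 \<longrightarrow> j = i"
    by (auto simp: necklace_V_def necklace_c_fort_def)
  then consider "s = 1" | "s = 2" "j \<noteq> i" | "s = 3" "j = i" by arith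
  then have "card (nbhd (necklace_E k) (j, s) \<inter> necklace_c_fort k i) = 2"
  proof cases
    case 1
    have "nbhd (necklace_E k) (j, 1) \<inter> necklace_c_fort k i = {(j, 0), (j, if j = i then 2 else 3)}"
      unfolding nbhd_necklace_b[OF v(2)] using v(2) by (auto simp: mem_necklace_c_fort)
    then show ?thesis using 1 by simp
  next
    case 2
    have "nbhd (necklace_E k) (j, 2) \<inter> necklace_c_fort k i = {(j, 3), (Suc j mod k, 0)}"
      unfolding nbhd_necklace_c[OF v(2)] using v(2) 2 by (auto simp: mem_necklace_c_fort)
    then show ?thesis using 2 by simp
  next
    case 3
    have "nbhd (necklace_E k) (j, 3) \<inter> necklace_c_fort k i = {(j, 0), (j, 2)}"
      unfolding nbhd_necklace_d[OF v(2)] using v(2) 3 by (auto simp: mem_necklace_c_fort)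
    then show ?thesis using 3 by simp
  qed
  then show "card (nbhd (necklace_E k) v \<inter> necklace_c_fort k i) \<noteq> 1" using v(1) by simp
qed

lemma zir_set_necklace_b_c:
  "zir_set (necklace_V k) (necklace_E k) ({..<k} \<times> {1, 2})"
  unfolding zir_set_def private_fort_def
proof (intro conjI ballI)
  fix x assume "x \<in> {..<k} \<times> {1::nat, 2}"
  then obtain i s where x: "x = (i, s)" "i < k" "s = 1 \<or> s = 2" by auto
  then show "\<exists>F. is_fort (necklace_V k) (necklace_E k) F \<and> ({..<k} \<times> {1, 2}) \<inter> F = {x}"
  proof (cases "s = 1")
    case True
    have "({..<k} \<times> {1, 2}) \<inter> {(i, 1), (i, 3)} = {x}" using x True by auto
    then show ?thesis using is_fort_necklace_b_d[OF x(2)] by blast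
  next
    case False
    have "({..<k} \<times> {1, 2}) \<inter> necklace_c_fort k i = {x}"
      using x False by (auto simp: necklace_c_fort_def necklace_V_def)
    then show ?thesis using is_fort_necklace_c_fort[OF x(2)] by blast
  qed
qed (auto simp: necklace_V_def)

theorem theorem4p4:
  fixes k :: nat
  assumes "k \<ge> 2"
  shows "ZIR (necklace_V k) (necklace_E k) = 2 * k \<and>
         2 * k * 2 = card (necklace_V k)"
proof
  have card_b_c: "card ({..<k} \<times> {1::nat, 2}) = 2 * k" by (simp add: card_cartesian_product)
  have "ZIR (necklace_V k) (necklace_E k) = card ({..<k} \<times> {1::nat, 2})"
  proof (rule ZIR_eqI[OF _ zir_set_necklace_b_c])
    show "finite (necklace_V k)" by (simp add: necklace_V_def)
    show "card T \<le> card ({..<k} \<times> {1::nat, 2})" if "zir_set (necklace_V k) (necklace_E k) T" for T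
      using zir_set_necklace_card_le[OF assms that] card_b_c by simp
  qed
  then show "ZIR (necklace_V k) (necklace_E k) = 2 * k" using card_b_c by simp
  show "2 * k * 2 = card (necklace_V k)"
    by (simp add: necklace_V_def card_cartesian_product)
qed

end
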